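(* Let $m,n\ge 2$, $P=\mathbb{R}^{m\times n}$, and let $G:P\times\mathbb{R}\to P$ be a smooth one-parameter family such that $G(\cdot,\lambda)$ is admissible for the influence network $\mathcal{N}_{mn}$ for every $\lambda$. Suppose $z_0\in V_{\rm s}$ and $G(z_0,\lambda_0)=0$, and that the kernel of the Jacobian $D_zG(z_0,\lambda_0)$ is the consensus subspace $V_{\rm c}$ (a consensus synchrony-breaking steady-state bifurcation from a fully synchronous equilibrium). Then, generically, for every $k$ with $1\le k\le n-1$ there is a branch of equilibria bifurcating from $(z_0,\lambda_0)$ corresponding to the axial subgroup $\mathbf{1}\times(\mathbf{S}_k\times\mathbf{S}_{n-k})$ of $\mathbf{S}_m\times\mathbf{S}_n$. These solution branches are tangent to $V_{\rm c}$, lie in the subspace $\mathrm{Fix}(\mathbf{S}_m\times\mathbf{1})=V_{\rm c}\oplus V_{\rm s}$, and are consensus solutions (all rows of the array are identical).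
   Context: $P$ is the space of real $m\times n$ arrays $z=(z_{ij})$ ($z_{ij}$ is the value agent $i$ assigns to option $j$), with $\Gamma=\mathbf{S}_m\times\mathbf{S}_n$ acting by $((\sigma,\tau)z)_{ij}=z_{\sigma^{-1}(i)\,\tau^{-1}(j)}$. For a subgroup $H\subseteq\Gamma$, $\mathrm{Fix}(H)=\{z\in P:hz=z\ \forall h\in H\}$. Admissibility: a map $F:P\to P$ is admissible for $\mathcal{N}_{mn}$ if there is a single function $g$, independent of $(i,j)$, with $F_{ij}(z)=g(z_{ij},z_{A_{ij}},z_{O_{ij}},z_{E_{ij}})$, where $A_{ij}=\{(i,l):l\ne j\}$, $O_{ij}=\{(k,j):k\ne i\}$, $E_{ij}=\{(k,l):k\ne i,l\ne j\}$, and $g$ is invariant under permutations of the arguments within each of these three groups; admissible maps are $\Gamma$-equivariant. Subspaces: $V_{\rm s}$ = arrays with all entries equal; $V_{\rm c}$ = arrays with all rows identical and each row summing to $0$; $V_{\rm dl}$ = arrays with all columns identical and each column summing to $0$; $V_{\rm d}$ = arrays all of whose rows and columns sum to $0$; $P=V_{\rm s}\oplus V_{\rm c}\oplus V_{\rm dl}\oplus V_{\rm d}$. A branch "corresponds to the axial subgroup $\Sigma$" if its equilibria have isotropy subgroup $\Sigma$ (up to conjugacy); here $\Sigma$ is axial on $V_{\rm c}$, i.e. $\dim(\mathrm{Fix}(\Sigma)\cap V_{\rm c})=1$. "Generically" means for generic admissible families $G$ satisfying the stated hypotheses. *)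

theory Defs
  imports "HOL-Analysis.Analysis" "HOL-Library.Multiset"
begin

text \<open>Arrays z = (z_ij): rows indexed by agents 'm, columns by options 'n.
  Entry z_ij is  z $ i $ j.\<close>
type_synonym ('m, 'n) arr = "(real ^ 'n) ^ 'm"

fun iter_dderiv :: "'a list \<Rightarrow> ('a::real_normed_vector \<Rightarrow> 'b::real_normed_vector) \<Rightarrow> 'a \<Rightarrow> 'b" where
  "iter_dderiv [] f = f"
| "iter_dderiv (v # vs) f = (\<lambda>x. frechet_derivative (iter_dderiv vs f) (at x) v)"

text \<open>f is smooth iff all iterated directional (Frechet) derivatives exist and are
  differentiable everywhere (on finite-dimensional spaces this is C-infinity).\<close>
definition smooth_map :: "('a::real_normed_vector \<Rightarrow> 'b::real_normed_vector) \<Rightarrow> bool" where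
  "smooth_map f \<longleftrightarrow> (\<forall>vs x. iter_dderiv vs f differentiable (at x))"

definition Gamma :: "(('m::finite \<Rightarrow> 'm) \<times> ('n::finite \<Rightarrow> 'n)) set" where
  "Gamma = {(\<sigma>, \<tau>). \<sigma> permutes UNIV \<and> \<tau> permutes UNIV}"

definition act :: "('m::finite \<Rightarrow> 'm) \<times> ('n::finite \<Rightarrow> 'n) \<Rightarrow> ('m, 'n) arr \<Rightarrow> ('m, 'n) arr" where
  "act h z = (\<chi> i j. z $ (inv (fst h) i) $ (inv (snd h) j))"

definition Fix :: "(('m::finite \<Rightarrow> 'm) \<times> ('n::finite \<Rightarrow> 'n)) set \<Rightarrow> ('m, 'n) arr set" where
  "Fix H = {z. \<forall>h\<in>H. act h z = z}"

definition isotropy :: "('m::finite, 'n::finite) arr \<Rightarrow> (('m \<Rightarrow> 'm) \<times> ('n \<Rightarrow> 'n)) set" where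
  "isotropy z = {h \<in> Gamma. act h z = z}"

definition rowperm_sub :: "(('m::finite \<Rightarrow> 'm) \<times> ('n::finite \<Rightarrow> 'n)) set" where
  "rowperm_sub = {(\<sigma>, \<tau>). \<sigma> permutes UNIV \<and> \<tau> = id}"

text \<open>1 x (S_K x S_{K^c}) (a copy of 1 x (S_k x S_(n-k)) when card K = k)\<close>
definition axial_sub :: "'n::finite set \<Rightarrow> (('m::finite \<Rightarrow> 'm) \<times> ('n \<Rightarrow> 'n)) set" where
  "axial_sub K = {(\<sigma>, \<tau>). \<sigma> = id \<and> \<tau> permutes UNIV \<and> \<tau> ` K = K}"

definition full_axial_sub :: "'n::finite set \<Rightarrow> (('m::finite \<Rightarrow> 'm) \<times> ('n \<Rightarrow> 'n)) set" where
  "full_axial_sub K = {(\<sigma>, \<tau>). \<sigma> permutes UNIV \<and> \<tau> permutes UNIV \<and> \<tau> ` K = K}"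

definition Vs :: "('m::finite, 'n::finite) arr set" where
  "Vs = {z. \<forall>i j k l. z $ i $ j = z $ k $ l}"

definition Vc :: "('m::finite, 'n::finite) arr set" where
  "Vc = {z. (\<forall>i k. z $ i = z $ k) \<and> (\<forall>i. (\<Sum>j\<in>UNIV. z $ i $ j) = 0)}"

definition Vdl :: "('m::finite, 'n::finite) arr set" where
  "Vdl = {z. (\<forall>i j l. z $ i $ j = z $ i $ l) \<and> (\<forall>j. (\<Sum>i\<in>UNIV. z $ i $ j) = 0)}"

definition Vd :: "('m::finite, 'n::finite) arr set" where
  "Vd = {z. (\<forall>i. (\<Sum>j\<in>UNIV. z $ i $ j) = 0) \<and> (\<forall>j. (\<Sum>i\<in>UNIV. z $ i $ j) = 0)}"

definition consensus :: "('m::finite, 'n::finite) arr \<Rightarrow> bool" where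
  "consensus z \<longleftrightarrow> (\<forall>i k. z $ i = z $ k)"

text \<open>F_ij(z) = g(z_ij, z_{A_ij}, z_{O_ij}, z_{E_ij}) with one g independent of (i,j),
  invariant under permutations inside each of the three argument groups; such a g is
  exactly a function of the three multisets of values.\<close>
definition admissible :: "(('m::finite, 'n::finite) arr \<Rightarrow> ('m, 'n) arr) \<Rightarrow> bool" where
  "admissible F \<longleftrightarrow>
     (\<exists>g :: real \<Rightarrow> real multiset \<Rightarrow> real multiset \<Rightarrow> real multiset \<Rightarrow> real.
        \<forall>z i j. F z $ i $ j =
          g (z $ i $ j)
            (image_mset (\<lambda>l. z $ i $ l) (mset_set {l. l \<noteq> j}))
            (image_mset (\<lambda>k. z $ k $ j) (mset_set {k. k \<noteq> i}))
            (image_mset (\<lambda>(k, l). z $ k $ l) (mset_set {(k, l). k \<noteq> i \<and> l \<noteq> j})))"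

end

theory Submission
  imports Defs
begin

(*
  Restricted to the fixed-point subspace of 1 x (S_k x S_(n-k)), which is spanned by the
  synchronous array 1 and the array v in V_c with value n - k on the columns of K and -k on
  the others, an admissible G takes values in the same two-valued column arrays.  In
  coordinates z = s 1 + x v its zeros are therefore the common zeros of two scalar functions
  of (s, x, lambda): the value A off K and the gap B between the values on and off K.
  Synchronous arrays are mapped to synchronous ones, so B vanishes for x = 0 and Hadamard's
  lemma gives B = x C.  The kernel hypothesis gives dA/dx = 0 and C = 0 at the bifurcation
  point and dA/ds <> 0, so A = 0 has a synchronous branch s = sigma(lambda).  The
  critical eigenvalue <D_z G v, v> equals m k (n - k) C along that branch, so the
  genericity hypothesis makes (A, C) regular in (s, lambda), and the implicit function
  theorem yields a curve (S x, x, Lambda x) of zeros.  For x <> 0 these are two-valued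
  column arrays with the required isotropy, and S' = sigma' Lambda' makes the branch
  tangent to v.
*)

section \<open>Admissible maps and two-valued column arrays\<close>

lemma image_mset_mset_set_bij_reindex:
  assumes "bij t"
  shows "image_mset (\<lambda>l. f (t l)) (mset_set {l. P l}) = image_mset f (mset_set {l. P (inv t l)})"
proof -
  have "image_mset (\<lambda>l. f (t l)) (mset_set {l. P l}) = image_mset f (image_mset t (mset_set {l. P l}))"
    by (simp add: image_mset.compositionality o_def)
  also have "\<dots> = image_mset f (mset_set {l. P (inv t l)})"
    using assms by (simp add: image_mset_mset_set[OF bij_is_inj[THEN inj_on_subset]] bij_image_Collect_eq)
  finally show ?thesis .
qed

lemma admissible_equivariant:
  fixes F :: "('m::finite, 'n::finite) arr \<Rightarrow> ('m, 'n) arr"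
  assumes adm: "admissible F" and \<sigma>: "\<sigma> permutes UNIV" and \<tau>: "\<tau> permutes UNIV"
  shows "F (act (\<sigma>, \<tau>) z) = act (\<sigma>, \<tau>) (F z)"
proof -
  obtain g where g: "\<And>z i j. F z $ i $ j =
          g (z $ i $ j)
            (image_mset (\<lambda>l. z $ i $ l) (mset_set {l. l \<noteq> j}))
            (image_mset (\<lambda>k. z $ k $ j) (mset_set {k. k \<noteq> i}))
            (image_mset (\<lambda>(k, l). z $ k $ l) (mset_set {(k, l). k \<noteq> i \<and> l \<noteq> j}))"
    using adm unfolding admissible_def by blast
  let ?s = "inv \<sigma>" and ?t = "inv \<tau>"
  have bs: "bij ?s" and bt: "bij ?t"
    using \<sigma> \<tau> by (simp_all add: bij_imp_bij_inv permutes_bij)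
  have inv_s: "inv ?s = \<sigma>" and inv_t: "inv ?t = \<tau>"
    using \<sigma> \<tau> by (simp_all add: inv_inv_eq permutes_bij)
  have bst: "bij (map_prod ?s ?t)"
    using bij_betw_map_prod[OF bs bt] by simp
  have inv_st: "inv (map_prod ?s ?t) = map_prod \<sigma> \<tau>"
    using \<sigma> \<tau> by (intro inv_unique_comp) (auto simp: fun_eq_iff permutes_inverses)
  have \<sigma>_ne: "\<sigma> k \<noteq> i \<longleftrightarrow> k \<noteq> ?s i" for k i
    using permutes_inv_eq[OF \<sigma>] by metis
  have \<tau>_ne: "\<tau> l \<noteq> j \<longleftrightarrow> l \<noteq> ?t j" for l j
    using permutes_inv_eq[OF \<tau>] by metis
  show ?thesis
  proof (simp only: vec_eq_iff, intro allI)
    fix i j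
    have row: "image_mset (\<lambda>l. z $ ?s i $ ?t l) (mset_set {l. l \<noteq> j})
        = image_mset (\<lambda>l. z $ ?s i $ l) (mset_set {l. l \<noteq> ?t j})"
      using image_mset_mset_set_bij_reindex[OF bt, of "\<lambda>l. z $ ?s i $ l" "\<lambda>l. l \<noteq> j"]
      by (simp add: inv_t \<tau>_ne)
    have col: "image_mset (\<lambda>k. z $ ?s k $ ?t j) (mset_set {k. k \<noteq> i})
        = image_mset (\<lambda>k. z $ k $ ?t j) (mset_set {k. k \<noteq> ?s i})"
      using image_mset_mset_set_bij_reindex[OF bs, of "\<lambda>k. z $ k $ ?t j" "\<lambda>k. k \<noteq> i"]
      by (simp add: inv_s \<sigma>_ne)
    have rest: "image_mset (\<lambda>(k, l). z $ ?s k $ ?t l) (mset_set {(k, l). k \<noteq> i \<and> l \<noteq> j})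
        = image_mset (\<lambda>(k, l). z $ k $ l) (mset_set {(k, l). k \<noteq> ?s i \<and> l \<noteq> ?t j})"
    proof -
      have "(\<lambda>kl. (\<lambda>(k, l). z $ k $ l) (map_prod ?s ?t kl)) = (\<lambda>(k, l). z $ ?s k $ ?t l)"
        by auto
      moreover have "{kl. (\<lambda>(k, l). k \<noteq> i \<and> l \<noteq> j) (inv (map_prod ?s ?t) kl)}
          = {(k, l). k \<noteq> ?s i \<and> l \<noteq> ?t j}"
        by (auto simp: inv_st \<sigma>_ne \<tau>_ne permutes_inverses[OF \<sigma>] permutes_inverses[OF \<tau>])
      ultimately show ?thesis
        using image_mset_mset_set_bij_reindex[OF bst, of "\<lambda>(k, l). z $ k $ l" "\<lambda>(k, l). k \<noteq> i \<and> l \<noteq> j"]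
        by simp
    qed
    show "F (act (\<sigma>, \<tau>) z) $ i $ j = act (\<sigma>, \<tau>) (F z) $ i $ j"
      unfolding act_def using row col rest by (simp add: g[of "\<chi> i j. z $ ?s i $ ?t j"] g[of z])
  qed
qed

definition col_pattern :: "'n::finite set \<Rightarrow> real \<Rightarrow> real \<Rightarrow> ('m::finite, 'n) arr" where
  "col_pattern K p q = (\<chi> i j. if j \<in> K then p else q)"

lemma col_pattern_nth [simp]: "col_pattern K p q $ i $ j = (if j \<in> K then p else q)"
  by (simp add: col_pattern_def)

lemma col_pattern_const: "col_pattern K s s = col_pattern UNIV s s"
  by (simp add: vec_eq_iff)

lemma permutes_inv_in_iff:
  assumes "\<tau> permutes UNIV"
  shows "inv \<tau> j \<in> K \<longleftrightarrow> j \<in> \<tau> ` K"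
  using assms by (metis image_iff permutes_inv_eq)

lemma act_col_pattern:
  assumes "\<tau> permutes UNIV" "\<tau> ` K = K"
  shows "act (\<sigma>, \<tau>) (col_pattern K p q) = col_pattern K p q"
  using assms by (simp add: act_def vec_eq_iff permutes_inv_in_iff)

lemma act_col_pattern_eq_iff:
  assumes \<tau>: "\<tau> permutes UNIV" and pq: "p \<noteq> q"
  shows "act (\<sigma>, \<tau>) (col_pattern K p q) = col_pattern K p q \<longleftrightarrow> \<tau> ` K = K"
proof -
  have "act (\<sigma>, \<tau>) (col_pattern K p q) = col_pattern K p q \<longleftrightarrow> (\<forall>j. inv \<tau> j \<in> K \<longleftrightarrow> j \<in> K)"
    using pq by (auto simp: act_def vec_eq_iff split: if_splits)
  also have "\<dots> \<longleftrightarrow> \<tau> ` K = K"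
    using permutes_inv_in_iff[OF \<tau>] by blast
  finally show ?thesis .
qed

lemma isotropy_col_pattern:
  assumes "p \<noteq> q"
  shows "isotropy (col_pattern K p q :: ('m::finite, 'n::finite) arr) = full_axial_sub K"
proof (intro set_eqI)
  fix h :: "('m \<Rightarrow> 'm) \<times> ('n \<Rightarrow> 'n)"
  show "h \<in> isotropy (col_pattern K p q) \<longleftrightarrow> h \<in> full_axial_sub K"
    using act_col_pattern_eq_iff[OF _ assms, of "snd h" "fst h" K]
    by (cases h) (auto simp: isotropy_def full_axial_sub_def Gamma_def)
qed

lemma col_pattern_in_Fix_axial_sub: "col_pattern K p q \<in> Fix (axial_sub K)"
  by (auto simp: Fix_def axial_sub_def act_col_pattern)

lemma col_pattern_in_Fix_rowperm_sub: "col_pattern K p q \<in> Fix rowperm_sub"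
  by (auto simp: Fix_def rowperm_sub_def act_def vec_eq_iff)

lemma consensus_col_pattern: "consensus (col_pattern K p q)"
  by (simp add: consensus_def vec_eq_iff)

lemma sum_if_mem_UNIV:
  fixes K :: "'n::finite set"
  shows "(\<Sum>j\<in>UNIV. if j \<in> K then a else b) = real (card K) * a + (real CARD('n) - real (card K)) * b"
proof -
  have "(\<Sum>j\<in>UNIV. if j \<in> K then a else b) = real (card K) * a + real (card (- K)) * b"
    by (simp add: sum.If_cases Compl_eq_Diff_UNIV)
  moreover have "real (card (- K)) = real CARD('n) - real (card K)"
    by (simp add: Compl_eq_Diff_UNIV card_Diff_subset of_nat_diff card_mono)
  ultimately show ?thesis by simp
qed

lemma col_pattern_in_Vc_iff:
  "(col_pattern K p q :: ('m::finite, 'n::finite) arr) \<in> Vc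
     \<longleftrightarrow> real (card K) * p + (real CARD('n) - real (card K)) * q = 0"
  by (simp add: Vc_def vec_eq_iff sum_if_mem_UNIV)

lemma col_pattern_in_Vc_plus_Vs:
  fixes K :: "'n::finite set"
  shows "(col_pattern K p q :: ('m::finite, 'n) arr) \<in> {a + b | a b. a \<in> Vc \<and> b \<in> Vs}"
proof -
  define \<mu> where "\<mu> = (real (card K) * p + (real CARD('n) - real (card K)) * q) / real CARD('n)"
  have "col_pattern K p q = col_pattern K (p - \<mu>) (q - \<mu>) + (col_pattern K \<mu> \<mu> :: ('m, 'n) arr)"
    by (simp add: vec_eq_iff)
  moreover have "(col_pattern K (p - \<mu>) (q - \<mu>) :: ('m, 'n) arr) \<in> Vc"
    unfolding col_pattern_in_Vc_iff \<mu>_def by (simp add: field_simps)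
  moreover have "(col_pattern K \<mu> \<mu> :: ('m, 'n) arr) \<in> Vs"
    by (simp add: Vs_def)
  ultimately show ?thesis by blast
qed

lemma inner_col_pattern:
  fixes K :: "'n::finite set"
  shows "inner (col_pattern K a b :: ('m::finite, 'n) arr) (col_pattern K p q)
    = real CARD('m) * (real (card K) * (a * p) + (real CARD('n) - real (card K)) * (b * q))"
proof -
  have "inner (col_pattern K a b :: ('m, 'n) arr) (col_pattern K p q)
      = (\<Sum>i\<in>(UNIV :: 'm set). \<Sum>j\<in>UNIV. if j \<in> K then a * p else b * q)"
    by (simp add: inner_vec_def if_distrib cong: if_cong)
  then show ?thesis by (simp add: sum_if_mem_UNIV)
qed

lemma admissible_col_pattern_nth:
  fixes F :: "('m::finite, 'n::finite) arr \<Rightarrow> ('m, 'n) arr"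
  assumes adm: "admissible F" and jj': "j \<in> K \<longleftrightarrow> j' \<in> K"
  shows "F (col_pattern K p q) $ i $ j = F (col_pattern K p q) $ i' $ j'"
proof -
  let ?s = "Transposition.transpose i i'" and ?t = "Transposition.transpose j j'"
  have "?t ` K = K"
    using jj' by (auto simp: in_transpose_image_iff Transposition.transpose_def)
  then have "F (col_pattern K p q) = F (act (?s, ?t) (col_pattern K p q))"
    by (simp add: act_col_pattern permutes_swap_id)
  also have "\<dots> = act (?s, ?t) (F (col_pattern K p q))"
    by (simp add: admissible_equivariant[OF adm] permutes_swap_id)
  finally have "F (col_pattern K p q) $ i $ j = act (?s, ?t) (F (col_pattern K p q)) $ i $ j"
    by (rule arg_cong)
  then show ?thesis
    by (simp add: act_def)
qed

lemma admissible_col_pattern: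
  fixes F :: "('m::finite, 'n::finite) arr \<Rightarrow> ('m, 'n) arr"
  assumes "admissible F" and "j1 \<in> K" and "j2 \<notin> K"
  shows "F (col_pattern K p q)
    = col_pattern K (F (col_pattern K p q) $ i $ j1) (F (col_pattern K p q) $ i $ j2)"
  using admissible_col_pattern_nth[OF assms(1)] assms(2,3) by (auto simp: vec_eq_iff)

lemma admissible_col_pattern_const_nth:
  fixes F :: "('m::finite, 'n::finite) arr \<Rightarrow> ('m, 'n) arr"
  assumes "admissible F"
  shows "F (col_pattern K s s) $ i $ j = F (col_pattern K s s) $ i' $ j'"
  using admissible_col_pattern_nth[OF assms, of j UNIV j'] by (simp add: col_pattern_const[of K])

section \<open>Smooth and continuously differentiable maps\<close>

lemma iter_dderiv_append: "iter_dderiv (vs @ ws) f = iter_dderiv vs (iter_dderiv ws f)"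
  by (induction vs) auto

lemma smooth_map_differentiable: "smooth_map f \<Longrightarrow> f differentiable (at x)"
  unfolding smooth_map_def by (metis iter_dderiv.simps(1))

lemma smooth_map_directional_derivative:
  "smooth_map f \<Longrightarrow> smooth_map (\<lambda>x. frechet_derivative f (at x) v)"
  unfolding smooth_map_def using iter_dderiv_append[of _ "[v]" f, symmetric] by simp

definition C1_map :: "('a::euclidean_space \<Rightarrow> 'b::real_normed_vector) \<Rightarrow> bool" where
  "C1_map f \<longleftrightarrow> (\<forall>x. f differentiable (at x))
     \<and> (\<forall>u. continuous_on UNIV (\<lambda>x. frechet_derivative f (at x) u))"

lemma C1_mapI:
  assumes "\<And>x. (f has_derivative f' x) (at x)" and "\<And>u. continuous_on UNIV (\<lambda>x. f' x u)"
  shows "C1_map f"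
proof -
  have "frechet_derivative f (at x) = f' x" for x
    using frechet_derivative_at[OF assms(1)] by simp
  then show ?thesis
    using assms unfolding C1_map_def differentiable_def by auto
qed

lemma C1_map_has_derivative: "C1_map f \<Longrightarrow> (f has_derivative frechet_derivative f (at x)) (at x)"
  unfolding C1_map_def using frechet_derivative_works by blast

lemma C1_map_bounded_linear: "C1_map f \<Longrightarrow> bounded_linear (frechet_derivative f (at x))"
  using C1_map_has_derivative has_derivative_bounded_linear by blast

lemma C1_map_continuous_on: "C1_map f \<Longrightarrow> continuous_on UNIV f"
  unfolding C1_map_def
  by (intro continuous_at_imp_continuous_on ballI differentiable_imp_continuous_within) auto

lemma C1_map_derivative_continuous_on:
  "C1_map f \<Longrightarrow> continuous_on UNIV (\<lambda>x. frechet_derivative f (at x) u)"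
  unfolding C1_map_def by blast

lemma smooth_map_imp_C1_map:
  fixes f :: "'a::euclidean_space \<Rightarrow> 'b::real_normed_vector"
  assumes "smooth_map f"
  shows "C1_map f"
  using smooth_map_differentiable[OF assms]
    smooth_map_differentiable[OF smooth_map_directional_derivative[OF assms]]
  unfolding C1_map_def
  by (auto intro!: continuous_at_imp_continuous_on differentiable_imp_continuous_within)

lemma C1_map_linear:
  assumes "bounded_linear L"
  shows "C1_map L" and "frechet_derivative L (at x) = L"
proof -
  have "(L has_derivative L) (at x)" for x
    using bounded_linear_imp_has_derivative[OF assms] .
  then show "C1_map L"
    by (rule C1_mapI) simp
  show "frechet_derivative L (at x) = L"
    by (rule frechet_derivative_at[symmetric]) fact
qed

lemma frechet_derivative_compose_linear:
  assumes "f differentiable (at (L x))" and "bounded_linear L"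
  shows "frechet_derivative (\<lambda>x. f (L x)) (at x) = (\<lambda>u. frechet_derivative f (at (L x)) (L u))"
  using has_derivative_compose[OF bounded_linear_imp_has_derivative[OF assms(2)]
      assms(1)[unfolded frechet_derivative_works]]
  by (rule frechet_derivative_at[symmetric])

lemma C1_map_compose_linear:
  assumes f: "C1_map f" and L: "bounded_linear L"
  shows "C1_map (\<lambda>x. f (L x))"
proof (rule C1_mapI)
  show "((\<lambda>x. f (L x)) has_derivative (\<lambda>u. frechet_derivative f (at (L x)) (L u))) (at x)" for x
    using has_derivative_compose[OF bounded_linear_imp_has_derivative[OF L] C1_map_has_derivative[OF f]] .
  show "continuous_on UNIV (\<lambda>x. frechet_derivative f (at (L x)) (L u))" for u
    using continuous_on_compose2[OF C1_map_derivative_continuous_on[OF f] linear_continuous_on[OF L]]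
    by blast
qed

lemma frechet_derivative_linear_compose:
  assumes "f differentiable (at x)" and "bounded_linear \<pi>"
  shows "frechet_derivative (\<lambda>x. \<pi> (f x)) (at x) = (\<lambda>u. \<pi> (frechet_derivative f (at x) u))"
  using bounded_linear.has_derivative[OF assms(2) assms(1)[unfolded frechet_derivative_works]]
  by (rule frechet_derivative_at[symmetric])

lemma C1_map_linear_compose:
  assumes f: "C1_map f" and \<pi>: "bounded_linear \<pi>"
  shows "C1_map (\<lambda>x. \<pi> (f x))"
proof (rule C1_mapI)
  show "((\<lambda>x. \<pi> (f x)) has_derivative (\<lambda>u. \<pi> (frechet_derivative f (at x) u))) (at x)" for x
    using bounded_linear.has_derivative[OF \<pi> C1_map_has_derivative[OF f]] .
  show "continuous_on UNIV (\<lambda>x. \<pi> (frechet_derivative f (at x) u))" for u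
    using bounded_linear.continuous_on[OF \<pi> C1_map_derivative_continuous_on[OF f]] .
qed

lemma C1_map_linear_compose_linear:
  assumes "C1_map f" and "bounded_linear L" and "bounded_linear \<pi>"
  shows "C1_map (\<lambda>x. \<pi> (f (L x)))"
  by (rule C1_map_linear_compose[OF C1_map_compose_linear[OF assms(1,2)] assms(3)])

lemma frechet_derivative_linear_compose_linear:
  assumes f: "\<And>y. f differentiable (at y)" and L: "bounded_linear L" and \<pi>: "bounded_linear \<pi>"
  shows "frechet_derivative (\<lambda>x. \<pi> (f (L x))) (at x) u = \<pi> (frechet_derivative f (at (L x)) (L u))"
proof -
  have "(\<lambda>x. f (L x)) differentiable (at x)"
    by (rule differentiable_compose[OF f bounded_linear_imp_differentiable[OF L]])
  then show ?thesis
    by (simp add: frechet_derivative_linear_compose[OF _ \<pi>] frechet_derivative_compose_linear[OF f L])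
qed

lemma frechet_derivative_partial:
  fixes G :: "'x::real_normed_vector \<Rightarrow> real \<Rightarrow> 'y::real_normed_vector"
  assumes "(\<lambda>p. G (fst p) (snd p)) differentiable (at (z, l))"
  shows "frechet_derivative (\<lambda>z. G z l) (at z) v = frechet_derivative (\<lambda>p. G (fst p) (snd p)) (at (z, l)) (v, 0)"
proof -
  have "((\<lambda>z. (z, l)) has_derivative (\<lambda>v. (v, 0))) (at z)"
    by (auto intro!: derivative_eq_intros)
  from has_derivative_compose[OF this assms[unfolded frechet_derivative_works]]
  have "((\<lambda>z. G z l) has_derivative (\<lambda>v. frechet_derivative (\<lambda>p. G (fst p) (snd p)) (at (z, l)) (v, 0))) (at z)"
    by simp
  then show ?thesis
    by (simp add: frechet_derivative_at[symmetric])
qed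

lemma has_real_derivative_compose_curve:
  fixes A :: "'a::real_normed_vector \<Rightarrow> real"
  assumes A: "A differentiable (at (c t))" and c: "(c has_vector_derivative c') (at t)"
  shows "((\<lambda>t. A (c t)) has_real_derivative frechet_derivative A (at (c t)) c') (at t)"
proof (rule has_derivative_imp_has_field_derivative)
  show "((\<lambda>t. A (c t)) has_derivative (\<lambda>h. frechet_derivative A (at (c t)) (h *\<^sub>R c'))) (at t)"
    using has_derivative_compose[OF c[unfolded has_vector_derivative_def] A[unfolded frechet_derivative_works]] .
  show "h * frechet_derivative A (at (c t)) c' = frechet_derivative A (at (c t)) (h *\<^sub>R c')" for h
    using linear_scale[OF linear_frechet_derivative[OF A]] by simp
qed

lemma frechet_derivative_zero_along_curve:
  fixes A :: "'a::real_normed_vector \<Rightarrow> real"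
  assumes "A differentiable (at (c t0))" and "(c has_vector_derivative c') (at t0)"
    and "open W" "t0 \<in> W" "\<And>t. t \<in> W \<Longrightarrow> A (c t) = 0"
  shows "frechet_derivative A (at (c t0)) c' = 0"
proof -
  have "((\<lambda>t. 0) has_real_derivative frechet_derivative A (at (c t0)) c') (at t0)"
    by (rule has_field_derivative_transform_within_open[OF
          has_real_derivative_compose_curve[OF assms(1,2)] assms(3,4)]) (simp add: assms(5))
  from DERIV_unique[OF this DERIV_const] show ?thesis .
qed

lemma linear_triple_eq:
  fixes g :: "real \<times> real \<times> real \<Rightarrow> real"
  assumes "linear g"
  shows "g (a, b, c) = a * g (1, 0, 0) + b * g (0, 1, 0) + c * g (0, 0, 1)"
proof -
  interpret linear g by (rule assms)
  have "(a, b, c) = a *\<^sub>R (1, 0, 0) + b *\<^sub>R (0, 1, 0) + c *\<^sub>R (0, 0, 1)"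
    by simp
  then have "g (a, b, c) = g (a *\<^sub>R (1, 0, 0) + b *\<^sub>R (0, 1, 0) + c *\<^sub>R (0, 0, 1))"
    by (rule arg_cong)
  then show ?thesis
    by (simp only: add scale) simp
qed

lemma frechet_derivative_triple_eq:
  fixes f :: "real \<times> real \<times> real \<Rightarrow> real"
  assumes "f differentiable (at p)"
  shows "frechet_derivative f (at p) (a, b, c) = a * frechet_derivative f (at p) (1, 0, 0)
    + b * frechet_derivative f (at p) (0, 1, 0) + c * frechet_derivative f (at p) (0, 0, 1)"
  by (rule linear_triple_eq[OF linear_frechet_derivative[OF assms]])

lemma has_vector_derivative_triple:
  fixes a b c :: "real \<Rightarrow> real"
  assumes "(a has_real_derivative a') (at t)" "(b has_real_derivative b') (at t)" "(c has_real_derivative c') (at t)"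
  shows "((\<lambda>t. (a t, b t, c t)) has_vector_derivative (a', b', c')) (at t)"
  using assms by (simp add: has_real_derivative_iff_has_vector_derivative has_vector_derivative_Pair)

lemma frechet_derivative_triple_zero_along_curve:
  fixes A :: "real \<times> real \<times> real \<Rightarrow> real"
  assumes A: "A differentiable (at (a t0, b t0, c t0))"
    and "(a has_real_derivative a') (at t0)" "(b has_real_derivative b') (at t0)" "(c has_real_derivative c') (at t0)"
    and "open W" "t0 \<in> W" "\<And>t. t \<in> W \<Longrightarrow> A (a t, b t, c t) = 0"
  shows "a' * frechet_derivative A (at (a t0, b t0, c t0)) (1, 0, 0)
    + b' * frechet_derivative A (at (a t0, b t0, c t0)) (0, 1, 0)
    + c' * frechet_derivative A (at (a t0, b t0, c t0)) (0, 0, 1) = 0"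
  using frechet_derivative_zero_along_curve[where c = "\<lambda>t. (a t, b t, c t)", OF A
      has_vector_derivative_triple[OF assms(2-4)] assms(5-7)]
  unfolding frechet_derivative_triple_eq[OF A, where a = a' and b = b' and c = c'] .

lemma bounded_linear_arr_nth: "bounded_linear (\<lambda>w :: ('m::finite, 'n::finite) arr. w $ i $ j)"
  by (rule bounded_linear_compose[OF bounded_linear_vec_nth bounded_linear_vec_nth])

lemma frechet_derivative_nth_eq_of_line:
  fixes F :: "'x::real_normed_vector \<Rightarrow> ('m::finite, 'n::finite) arr"
  assumes F: "F differentiable (at a)"
    and line: "\<And>t. F (a + t *\<^sub>R d) $ i $ j = F (a + t *\<^sub>R d) $ i' $ j'"
  shows "frechet_derivative F (at a) d $ i $ j = frechet_derivative F (at a) d $ i' $ j'"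
proof -
  define \<pi> where "\<pi> w = w $ i $ j - w $ i' $ j'" for w :: "('m, 'n) arr"
  have \<pi>: "bounded_linear \<pi>"
    unfolding \<pi>_def by (intro bounded_linear_sub bounded_linear_compose[OF bounded_linear_vec_nth bounded_linear_vec_nth])
  have "(\<lambda>y. \<pi> (F y)) differentiable (at ((\<lambda>t. a + t *\<^sub>R d) 0))"
    using differentiable_compose[OF bounded_linear_imp_differentiable[OF \<pi>] F] by simp
  moreover have "((\<lambda>t. a + t *\<^sub>R d) has_vector_derivative d) (at 0)"
    by (auto intro!: derivative_eq_intros)
  ultimately have "frechet_derivative (\<lambda>y. \<pi> (F y)) (at ((\<lambda>t. a + t *\<^sub>R d) 0)) d = 0"
    by (rule frechet_derivative_zero_along_curve[OF _ _ open_UNIV UNIV_I]) (simp add: \<pi>_def line)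
  then have "\<pi> (frechet_derivative F (at a) d) = 0"
    by (simp add: frechet_derivative_linear_compose[OF F \<pi>])
  then show ?thesis
    by (simp add: \<pi>_def)
qed

section \<open>An implicit function theorem for two equations in three variables\<close>

lemma C1_map_local_inverse:
  fixes f :: "'a::euclidean_space \<Rightarrow> 'a"
  assumes f: "C1_map f" and J: "bounded_linear J"
    and J_inv: "\<And>u. J (frechet_derivative f (at x0) u) = u"
  obtains V g where "open V" "f x0 \<in> V" "\<And>y. y \<in> V \<Longrightarrow> f (g y) = y" "g (f x0) = x0"
    "continuous_on V g" "\<And>y. y \<in> V \<Longrightarrow> g differentiable (at y)"
proof -
  have Df: "blinfun_apply (Blinfun (frechet_derivative f (at x))) = frechet_derivative f (at x)" for x
    using bounded_linear_Blinfun_apply[OF C1_map_bounded_linear[OF f]] .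
  have der: "(f has_derivative blinfun_apply (Blinfun (frechet_derivative f (at x)))) (at x)" for x
    unfolding Df by (rule C1_map_has_derivative[OF f])
  have cont: "continuous_on UNIV (\<lambda>x. Blinfun (frechet_derivative f (at x)))"
    by (rule continuous_on_blinfun_componentwise) (simp add: Df C1_map_derivative_continuous_on[OF f])
  have inv: "Blinfun J o\<^sub>L Blinfun (frechet_derivative f (at x0)) = id_blinfun"
    by (rule blinfun_eqI) (simp add: bounded_linear_Blinfun_apply[OF J] Df J_inv)
  obtain U' V g g' where "x0 \<in> U'" "open V" "f x0 \<in> V" "homeomorphism U' V f g"
      and g': "\<And>y. y \<in> V \<Longrightarrow> (g has_derivative (g' y)) (at y)"
    by (rule inverse_function_theorem[OF open_UNIV der cont UNIV_I inv]) blast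
  then show ?thesis
    using that[of V g] g' unfolding homeomorphism_def differentiable_def by blast
qed

lemma local_inverse_fixing_middle:
  fixes A C :: "real \<times> real \<times> real \<Rightarrow> real"
  assumes A: "C1_map A" and C: "C1_map C"
    and det: "frechet_derivative A (at p0) (1, 0, 0) * frechet_derivative C (at p0) (0, 0, 1)
      - frechet_derivative A (at p0) (0, 0, 1) * frechet_derivative C (at p0) (1, 0, 0) \<noteq> 0"
  defines "\<Psi> \<equiv> \<lambda>p. (A p, fst (snd p), C p)"
  obtains V g where "open V" "\<Psi> p0 \<in> V" "\<And>y. y \<in> V \<Longrightarrow> \<Psi> (g y) = y" "g (\<Psi> p0) = p0"
    "continuous_on V g" "\<And>y. y \<in> V \<Longrightarrow> g differentiable (at y)"
proof (rule C1_map_local_inverse)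
  define As Ax Al where "As = frechet_derivative A (at p0) (1, 0, 0)"
    and "Ax = frechet_derivative A (at p0) (0, 1, 0)" and "Al = frechet_derivative A (at p0) (0, 0, 1)"
  define Cs Cx Cl where "Cs = frechet_derivative C (at p0) (1, 0, 0)"
    and "Cx = frechet_derivative C (at p0) (0, 1, 0)" and "Cl = frechet_derivative C (at p0) (0, 0, 1)"
  define D where "D = As * Cl - Al * Cs"
  have D: "D \<noteq> 0"
    using det by (simp add: D_def As_def Al_def Cs_def Cl_def)
  have \<Psi>_deriv: "(\<Psi> has_derivative (\<lambda>u. (frechet_derivative A (at p) u, fst (snd u),
      frechet_derivative C (at p) u))) (at p)" for p
    unfolding \<Psi>_def
    by (intro has_derivative_Pair C1_map_has_derivative[OF A] C1_map_has_derivative[OF C])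
      (auto intro!: derivative_eq_intros)
  show "C1_map \<Psi>"
    by (rule C1_mapI[OF \<Psi>_deriv])
      (intro continuous_on_Pair C1_map_derivative_continuous_on[OF A]
        C1_map_derivative_continuous_on[OF C] continuous_on_const)
  have DA: "frechet_derivative A (at p0) (a, b, c) = a * As + b * Ax + c * Al" for a b c
    unfolding As_def Ax_def Al_def
    by (rule linear_triple_eq[OF bounded_linear.linear[OF C1_map_bounded_linear[OF A]]])
  have DC: "frechet_derivative C (at p0) (a, b, c) = a * Cs + b * Cx + c * Cl" for a b c
    unfolding Cs_def Cx_def Cl_def
    by (rule linear_triple_eq[OF bounded_linear.linear[OF C1_map_bounded_linear[OF C]]])
  have D\<Psi>: "frechet_derivative \<Psi> (at p0) (a, b, c)
      = (a * As + b * Ax + c * Al, b, a * Cs + b * Cx + c * Cl)" for a b c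
    by (simp add: frechet_derivative_at[OF \<Psi>_deriv, of p0, symmetric] DA DC)
  \<comment> \<open>Cramer's rule in the variables s and l\<close>
  define J where "J = (\<lambda>(y1, y2, y3). ((Cl * (y1 - Ax * y2) - Al * (y3 - Cx * y2)) / D, y2,
      (As * (y3 - Cx * y2) - Cs * (y1 - Ax * y2)) / D))"
  show "bounded_linear J"
    unfolding linear_conv_bounded_linear[symmetric] J_def
    by (rule linearI) (auto simp: split_beta algebra_simps add_divide_distrib diff_divide_distrib)
  show "J (frechet_derivative \<Psi> (at p0) u) = u" for u
    using D by (cases u) (simp add: D\<Psi> J_def D_def field_simps)
qed (rule that)

lemma implicit_curve:
  fixes A C :: "real \<times> real \<times> real \<Rightarrow> real"
  assumes A: "C1_map A" and C: "C1_map C"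
    and zero: "A (s0, t0, l0) = 0" "C (s0, t0, l0) = 0"
    and det: "frechet_derivative A (at (s0, t0, l0)) (1, 0, 0) * frechet_derivative C (at (s0, t0, l0)) (0, 0, 1)
      - frechet_derivative A (at (s0, t0, l0)) (0, 0, 1) * frechet_derivative C (at (s0, t0, l0)) (1, 0, 0) \<noteq> 0"
  obtains \<epsilon> S \<Lambda> where "\<epsilon> > 0" "S t0 = s0" "\<Lambda> t0 = l0"
    "continuous_on (ball t0 \<epsilon>) S" "continuous_on (ball t0 \<epsilon>) \<Lambda>"
    "\<And>t. t \<in> ball t0 \<epsilon> \<Longrightarrow> A (S t, t, \<Lambda> t) = 0 \<and> C (S t, t, \<Lambda> t) = 0"
    "S differentiable (at t0)" "\<Lambda> differentiable (at t0)"
proof -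
  define \<Psi> where "\<Psi> p = (A p, fst (snd p), C p)" for p :: "real \<times> real \<times> real"
  obtain V g where V: "open V" "(0, t0, 0) \<in> V" and g: "\<And>y. y \<in> V \<Longrightarrow> \<Psi> (g y) = y"
    "g (0, t0, 0) = (s0, t0, l0)" "continuous_on V g" "\<And>y. y \<in> V \<Longrightarrow> g differentiable (at y)"
    using local_inverse_fixing_middle[OF A C det] zero unfolding \<Psi>_def[abs_def] by auto
  obtain \<epsilon> where \<epsilon>: "\<epsilon> > 0" "ball (0, t0, 0) \<epsilon> \<subseteq> V"
    using V open_contains_ball by metis
  have line_V: "(0, t, 0) \<in> V" if "t \<in> ball t0 \<epsilon>" for t
    using that \<epsilon>(2) by (auto simp: dist_Pair_Pair)
  define S where "S t = fst (g (0, t, 0))" for t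
  define \<Lambda> where "\<Lambda> t = snd (snd (g (0, t, 0)))" for t
  have "A (S t, t, \<Lambda> t) = 0 \<and> C (S t, t, \<Lambda> t) = 0" if "t \<in> ball t0 \<epsilon>" for t
  proof -
    have "\<Psi> (g (0, t, 0)) = (0, t, 0)"
      using g(1)[OF line_V[OF that]] .
    moreover from this have "g (0, t, 0) = (S t, t, \<Lambda> t)"
      by (simp add: \<Psi>_def S_def \<Lambda>_def prod_eq_iff)
    ultimately show ?thesis
      by (simp add: \<Psi>_def)
  qed
  moreover have "S t0 = s0" "\<Lambda> t0 = l0"
    using g(2) by (simp_all add: S_def \<Lambda>_def)
  moreover have "continuous_on (ball t0 \<epsilon>) S" "continuous_on (ball t0 \<epsilon>) \<Lambda>"
  proof -
    have "continuous_on (ball t0 \<epsilon>) (\<lambda>t. g (0, t, 0))"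
      by (rule continuous_on_compose2[OF g(3)]) (auto intro!: continuous_intros line_V)
    then show "continuous_on (ball t0 \<epsilon>) S" "continuous_on (ball t0 \<epsilon>) \<Lambda>"
      unfolding S_def \<Lambda>_def by (auto intro!: continuous_intros)
  qed
  moreover have "S differentiable (at t0)" "\<Lambda> differentiable (at t0)"
  proof -
    have "(\<lambda>t::real. (0::real, t, 0::real)) differentiable (at t0)"
      by (rule bounded_linear_imp_differentiable) (auto intro!: bounded_linear_intros)
    then have "(\<lambda>t. g (0, t, 0)) differentiable (at t0)"
      using differentiable_compose[where f = g and g = "\<lambda>t. (0, t, 0)"] g(4) V(2) by simp
    note line_diff = differentiable_compose[OF bounded_linear_imp_differentiable this]
    show "S differentiable (at t0)"
      unfolding S_def by (rule line_diff[OF bounded_linear_fst])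
    show "\<Lambda> differentiable (at t0)"
      unfolding \<Lambda>_def by (rule line_diff[OF bounded_linear_compose[OF bounded_linear_snd bounded_linear_snd]])
  qed
  ultimately show ?thesis
    using that \<epsilon>(1) by blast
qed

section \<open>Hadamard's lemma in the middle variable\<close>

definition x_average :: "(real \<times> real \<times> real \<Rightarrow> real) \<Rightarrow> real \<times> real \<times> real \<Rightarrow> real" where
  "x_average b p = integral {0..1} (\<lambda>\<tau>. b (fst p, \<tau> * fst (snd p), snd (snd p)))"

lemma x_average_x_zero: "x_average b (s, 0, l) = b (s, 0, l)"
  by (simp add: x_average_def)

lemma hadamard_x:
  fixes B :: "real \<times> real \<times> real \<Rightarrow> real"
  assumes B: "\<And>p. B differentiable (at p)"
  shows "B (s, x, l) = B (s, 0, l) + x * x_average (\<lambda>p. frechet_derivative B (at p) (0, 1, 0)) (s, x, l)"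
proof -
  let ?Bx = "\<lambda>p. frechet_derivative B (at p) (0, 1, 0)"
  have "((\<lambda>\<tau>. B (s, \<tau> * x, l)) has_real_derivative x * ?Bx (s, \<tau> * x, l)) (at \<tau>)" for \<tau>
  proof -
    have "((\<lambda>\<tau>. (s, \<tau> * x, l)) has_vector_derivative (0, x, 0)) (at \<tau>)"
      by (auto intro!: derivative_eq_intros simp: has_real_derivative_iff_has_vector_derivative[symmetric])
    from has_real_derivative_compose_curve[OF B this]
    show ?thesis
      using linear_triple_eq[OF linear_frechet_derivative[OF B], where a = 0 and b = x and c = 0] by simp
  qed
  then have "((\<lambda>\<tau>. x * ?Bx (s, \<tau> * x, l)) has_integral B (s, 1 * x, l) - B (s, 0 * x, l)) {0..1}"
    by (intro fundamental_theorem_of_calculus)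
      (auto simp: has_real_derivative_iff_has_vector_derivative intro: has_vector_derivative_at_within)
  then have "integral {0..1} (\<lambda>\<tau>. x * ?Bx (s, \<tau> * x, l)) = B (s, 1 * x, l) - B (s, 0 * x, l)"
    by (rule integral_unique)
  then show ?thesis
    by (simp add: x_average_def)
qed

lemma C1_map_x_average:
  fixes b :: "real \<times> real \<times> real \<Rightarrow> real"
  assumes b: "C1_map b"
  shows "C1_map (x_average b)"
proof -
  let ?Db = "\<lambda>q. frechet_derivative b (at q)"
  define \<psi> where "\<psi> \<tau> p = (fst p, \<tau> * fst (snd p), snd (snd p))" for \<tau> :: real and p :: "real \<times> real \<times> real"
  have \<psi>: "bounded_linear (\<psi> \<tau>)" for \<tau>
    unfolding \<psi>_def by (auto intro!: bounded_linear_intros)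
  have avg: "x_average b p = integral (cbox 0 1) (\<lambda>\<tau>. b (\<psi> \<tau> p))" for p
    by (simp add: x_average_def \<psi>_def)
  define fx where "fx p \<tau> = Blinfun (\<lambda>u. ?Db (\<psi> \<tau> p) (\<psi> \<tau> u))" for p \<tau>
  have fx_apply: "blinfun_apply (fx p \<tau>) = (\<lambda>u. ?Db (\<psi> \<tau> p) (\<psi> \<tau> u))" for p \<tau>
    unfolding fx_def
    by (rule bounded_linear_Blinfun_apply[OF bounded_linear_compose[OF C1_map_bounded_linear[OF b] \<psi>]])
  have "((\<lambda>p. b (\<psi> \<tau> p)) has_derivative blinfun_apply (fx p \<tau>)) (at p within UNIV)" for p \<tau>
    unfolding fx_apply
    by (rule has_derivative_compose[OF bounded_linear_imp_has_derivative[OF \<psi>] C1_map_has_derivative[OF b]])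
  moreover have "(\<lambda>\<tau>. b (\<psi> \<tau> p)) integrable_on cbox 0 1" for p
    unfolding \<psi>_def
    by (intro integrable_continuous continuous_on_compose2[OF C1_map_continuous_on[OF b]])
      (auto intro!: continuous_intros)
  moreover have cont_fx: "continuous_on (UNIV \<times> cbox 0 1) (\<lambda>(p, \<tau>). fx p \<tau>)"
  proof (rule continuous_on_blinfun_componentwise)
    fix i :: "real \<times> real \<times> real"
    have Db_cont: "continuous_on X (\<lambda>z. ?Db (\<psi> (snd z) (fst z)) e)" for X e
      unfolding \<psi>_def
      by (intro continuous_on_compose2[OF C1_map_derivative_continuous_on[OF b]])
        (auto intro!: continuous_intros)
    have "blinfun_apply (fx p \<tau>) i = fst i * ?Db (\<psi> \<tau> p) (1, 0, 0)
        + (\<tau> * fst (snd i)) * ?Db (\<psi> \<tau> p) (0, 1, 0) + snd (snd i) * ?Db (\<psi> \<tau> p) (0, 0, 1)" for p \<tau>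
      using linear_triple_eq[OF bounded_linear.linear[OF C1_map_bounded_linear[OF b]],
          of "\<psi> \<tau> p" "fst i" "\<tau> * fst (snd i)" "snd (snd i)"]
      by (simp add: fx_apply \<psi>_def)
    then show "continuous_on (UNIV \<times> cbox 0 1) (\<lambda>x. blinfun_apply ((\<lambda>(p, \<tau>). fx p \<tau>) x) i)"
      unfolding split_beta by (auto intro!: continuous_intros Db_cont)
  qed
  ultimately have "(x_average b has_derivative blinfun_apply (integral (cbox 0 1) (fx p))) (at p)" for p
    unfolding avg by (intro leibniz_rule) auto
  moreover have "continuous_on UNIV (\<lambda>p. integral (cbox 0 1) (fx p))"
    by (rule integral_continuous_on_param[OF cont_fx])
  ultimately show ?thesis
    by (intro C1_mapI[where f' = "\<lambda>p. blinfun_apply (integral (cbox 0 1) (fx p))"])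
      (auto intro!: continuous_intros)
qed

section \<open>Reduction to the axial fixed-point subspace\<close>

definition axial_consensus_branch ::
    "(('m::finite, 'n::finite) arr \<Rightarrow> real \<Rightarrow> ('m, 'n) arr) \<Rightarrow> ('m, 'n) arr \<Rightarrow> real \<Rightarrow> 'n set \<Rightarrow> bool" where
  "axial_consensus_branch G z0 lam0 K \<longleftrightarrow>
    (\<exists>\<epsilon> z lam zs v. \<epsilon> > 0
        \<and> continuous_on {-\<epsilon><..<\<epsilon>} z \<and> continuous_on {-\<epsilon><..<\<epsilon>} lam
        \<and> z 0 = z0 \<and> lam 0 = lam0
        \<and> (\<forall>t\<in>{-\<epsilon><..<\<epsilon>}. G (z t) (lam t) = 0)
        \<and> (\<forall>t\<in>{-\<epsilon><..<\<epsilon>}. t \<noteq> 0 \<longrightarrow>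
              isotropy (z t) = full_axial_sub K
            \<and> z t \<in> Fix (axial_sub K)
            \<and> z t \<in> Fix rowperm_sub
            \<and> z t \<in> {a + b | a b. a \<in> Vc \<and> b \<in> Vs}
            \<and> consensus (z t))
        \<and> zs lam0 = z0 \<and> continuous (at lam0) zs \<and> (\<forall>l. zs l \<in> Vs)
        \<and> (\<forall>\<^sub>F l in at lam0. G (zs l) l = 0)
        \<and> v \<in> Vc \<and> v \<noteq> 0
        \<and> ((\<lambda>t. (z t - zs (lam t) - t *\<^sub>R v) /\<^sub>R t) \<longlongrightarrow> 0) (at 0))"

(* value_off, gap and gap_quot are the functions A, B and C of the proof idea above; the columns
   j1 \<in> K, j2 \<notin> K and the row i0 only select entries. *)
locale consensus_bifurcation =
  fixes G :: "('m::finite, 'n::finite) arr \<Rightarrow> real \<Rightarrow> ('m, 'n) arr"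
    and z0 :: "('m, 'n) arr" and lam0 :: real
    and K :: "'n set" and j1 j2 :: 'n and i0 :: 'm
  assumes smooth: "smooth_map (\<lambda>p. G (fst p) (snd p))"
    and adm: "\<forall>l. admissible (\<lambda>z. G z l)"
    and sync: "z0 \<in> Vs" and eq: "G z0 lam0 = 0"
    and ker: "{w. frechet_derivative (\<lambda>z. G z lam0) (at z0) w = 0} = Vc"
    and j1: "j1 \<in> K" and j2: "j2 \<notin> K"
begin

abbreviation G_pair :: "('m, 'n) arr \<times> real \<Rightarrow> ('m, 'n) arr" where
  "G_pair \<equiv> \<lambda>p. G (fst p) (snd p)"

definition axial_dir :: "('m, 'n) arr" where
  "axial_dir = col_pattern K (real CARD('n) - real (card K)) (- real (card K))"

definition pat :: "real \<Rightarrow> real \<Rightarrow> ('m, 'n) arr" where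
  "pat s x = col_pattern K s s + x *\<^sub>R axial_dir"

definition emb :: "real \<times> real \<times> real \<Rightarrow> ('m, 'n) arr \<times> real" where
  "emb p = (pat (fst p) (fst (snd p)), snd (snd p))"

definition value_off :: "real \<times> real \<times> real \<Rightarrow> real" where
  "value_off p = G_pair (emb p) $ i0 $ j2"

definition gap :: "real \<times> real \<times> real \<Rightarrow> real" where
  "gap p = G_pair (emb p) $ i0 $ j1 - G_pair (emb p) $ i0 $ j2"

definition gap_quot :: "real \<times> real \<times> real \<Rightarrow> real" where
  "gap_quot = x_average (\<lambda>p. frechet_derivative gap (at p) (0, 1, 0))"

definition s0 :: real where
  "s0 = z0 $ i0 $ j1"

abbreviation base_deriv :: "(real \<times> real \<times> real \<Rightarrow> real) \<Rightarrow> real \<times> real \<times> real \<Rightarrow> real" where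
  "base_deriv f \<equiv> frechet_derivative f (at (s0, 0, lam0))"

lemma card_K_bounds: "0 < real (card K)" "real (card K) < real CARD('n)"
  using j1 j2 by (auto simp: card_gt_0_iff intro!: psubset_card_mono)

lemma axial_dir_in_Vc: "axial_dir \<in> Vc"
  by (simp add: axial_dir_def col_pattern_in_Vc_iff algebra_simps)

lemma axial_dir_nonzero: "axial_dir \<noteq> 0"
proof
  assume "axial_dir = 0"
  then have "axial_dir $ i0 $ j1 = 0" by simp
  then show False
    using card_K_bounds j1 by (simp add: axial_dir_def)
qed

lemma pat_eq: "pat s x = col_pattern K (s + x * (real CARD('n) - real (card K))) (s - x * real (card K))"
  by (simp add: pat_def axial_dir_def vec_eq_iff)

lemma pat_s0: "pat s0 0 = z0"
  using sync by (simp add: Vs_def s0_def pat_def vec_eq_iff)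

lemma emb_apply: "emb (s, x, l) = (pat s x, l)"
  by (simp add: emb_def)

lemma pat_1_0: "pat 1 0 = col_pattern K 1 1"
  by (simp add: pat_def)

lemma pat_0_1: "pat 0 1 = axial_dir"
  by (simp add: pat_def vec_eq_iff)

lemma pat_eq_scaleR: "pat s x = s *\<^sub>R col_pattern K 1 1 + x *\<^sub>R axial_dir"
  by (simp add: pat_def vec_eq_iff)

lemma pat_const_in_Vs: "pat s 0 \<in> Vs"
  by (simp add: pat_def Vs_def)

lemma bounded_linear_emb: "bounded_linear emb"
proof -
  have "emb = (\<lambda>p. fst p *\<^sub>R (col_pattern K 1 1, 0) + fst (snd p) *\<^sub>R (axial_dir, 0) + snd (snd p) *\<^sub>R (0, 1))"
    by (simp add: fun_eq_iff emb_def pat_def vec_eq_iff)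
  then show ?thesis
    by (auto intro!: bounded_linear_intros)
qed

lemma G_pat_eq: "G (pat s x) l = col_pattern K (gap (s, x, l) + value_off (s, x, l)) (value_off (s, x, l))"
  using admissible_col_pattern[OF adm[rule_format, of l] j1 j2, where i = i0]
  by (simp add: gap_def value_off_def emb_def pat_eq)

lemma G_pat_eq_0:
  assumes "value_off (s, x, l) = 0" and "gap (s, x, l) = 0"
  shows "G (pat s x) l = 0"
  using assms by (simp add: G_pat_eq vec_eq_iff)

lemma gap_sync: "gap (s, 0, l) = 0"
  using admissible_col_pattern_const_nth[OF adm[rule_format, of l], where K = K and s = s and i = i0 and j = j1 and i' = i0 and j' = j2]
  by (simp add: gap_def emb_def pat_def)

lemma C1_map_G_pair: "C1_map G_pair"
  by (rule smooth_map_imp_C1_map[OF smooth])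

lemma G_pair_differentiable: "G_pair differentiable (at y)"
  by (rule smooth_map_differentiable[OF smooth])

lemma C1_map_value_off: "C1_map value_off"
  unfolding value_off_def[abs_def]
  by (rule C1_map_linear_compose_linear[where \<pi> = "\<lambda>w. w $ i0 $ j2",
        OF C1_map_G_pair bounded_linear_emb bounded_linear_arr_nth])

lemma C1_map_gap: "C1_map gap"
  unfolding gap_def[abs_def]
  by (rule C1_map_linear_compose_linear[where \<pi> = "\<lambda>w. w $ i0 $ j1 - w $ i0 $ j2",
        OF C1_map_G_pair bounded_linear_emb bounded_linear_sub[OF bounded_linear_arr_nth bounded_linear_arr_nth]])

lemma value_off_differentiable: "value_off differentiable (at p)"
  using C1_map_value_off unfolding C1_map_def by blast

lemma gap_differentiable: "gap differentiable (at p)"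
  using C1_map_gap unfolding C1_map_def by blast

lemma frechet_derivative_value_off:
  "frechet_derivative value_off (at p) u = frechet_derivative G_pair (at (emb p)) (emb u) $ i0 $ j2"
  unfolding value_off_def[abs_def]
  by (rule frechet_derivative_linear_compose_linear[where \<pi> = "\<lambda>w. w $ i0 $ j2",
        OF G_pair_differentiable bounded_linear_emb bounded_linear_arr_nth])

lemma frechet_derivative_gap:
  "frechet_derivative gap (at p) u = frechet_derivative G_pair (at (emb p)) (emb u) $ i0 $ j1
     - frechet_derivative G_pair (at (emb p)) (emb u) $ i0 $ j2"
  unfolding gap_def[abs_def]
  by (rule frechet_derivative_linear_compose_linear[where \<pi> = "\<lambda>w. w $ i0 $ j1 - w $ i0 $ j2",
        OF G_pair_differentiable bounded_linear_emb bounded_linear_sub[OF bounded_linear_arr_nth bounded_linear_arr_nth]])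

lemma frechet_derivative_G_pair_emb:
  "frechet_derivative G_pair (at (emb p)) (emb u)
     = col_pattern K (frechet_derivative gap (at p) u + frechet_derivative value_off (at p) u)
         (frechet_derivative value_off (at p) u)"
proof -
  have "frechet_derivative G_pair (at (emb p)) (emb u) $ i $ j
      = frechet_derivative G_pair (at (emb p)) (emb u) $ i0 $ (if j \<in> K then j1 else j2)" for i j
  proof (rule frechet_derivative_nth_eq_of_line[OF G_pair_differentiable])
    fix t :: real
    obtain s x l where "p + t *\<^sub>R u = (s, x, l)"
      by (metis prod.collapse)
    moreover have "emb p + t *\<^sub>R emb u = emb (p + t *\<^sub>R u)"
      using bounded_linear_emb by (simp add: linear_add linear_scale bounded_linear.linear)
    ultimately show "G_pair (emb p + t *\<^sub>R emb u) $ i $ j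
        = G_pair (emb p + t *\<^sub>R emb u) $ i0 $ (if j \<in> K then j1 else j2)"
      using j1 j2 by (simp add: emb_def G_pat_eq)
  qed
  note nth = this
  show ?thesis
  proof (simp only: vec_eq_iff, intro allI)
    fix i j
    show "frechet_derivative G_pair (at (emb p)) (emb u) $ i $ j
        = col_pattern K (frechet_derivative gap (at p) u + frechet_derivative value_off (at p) u)
            (frechet_derivative value_off (at p) u) $ i $ j"
      using nth[of i j] j1 j2 by (simp add: frechet_derivative_gap frechet_derivative_value_off)
  qed
qed

lemma C1_map_gap_quot: "C1_map gap_quot"
proof -
  have "(\<lambda>p. frechet_derivative gap (at p) (0, 1, 0))
      = (\<lambda>p. (\<lambda>w. w $ i0 $ j1 - w $ i0 $ j2) ((\<lambda>y. frechet_derivative G_pair (at y) (axial_dir, 0)) (emb p)))"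
    by (simp add: fun_eq_iff frechet_derivative_gap emb_apply pat_0_1)
  moreover have "C1_map (\<lambda>y. frechet_derivative G_pair (at y) (axial_dir, 0))"
    by (rule smooth_map_imp_C1_map[OF smooth_map_directional_derivative[OF smooth]])
  ultimately have "C1_map (\<lambda>p. frechet_derivative gap (at p) (0, 1, 0))"
    using C1_map_linear_compose_linear[OF _ bounded_linear_emb
        bounded_linear_sub[OF bounded_linear_arr_nth bounded_linear_arr_nth]] by simp
  then show ?thesis
    unfolding gap_quot_def by (rule C1_map_x_average)
qed

lemma gap_quot_differentiable: "gap_quot differentiable (at p)"
  using C1_map_gap_quot unfolding C1_map_def by blast

lemma gap_eq: "gap (s, x, l) = x * gap_quot (s, x, l)"
  using hadamard_x[OF gap_differentiable] gap_sync by (simp add: gap_quot_def)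

lemma gap_quot_x_zero: "gap_quot (s, 0, l) = frechet_derivative gap (at (s, 0, l)) (0, 1, 0)"
  by (simp add: gap_quot_def x_average_x_zero)

lemma frechet_derivative_G_pair_partial:
  "frechet_derivative G_pair (at (z, l)) (w, 0) = frechet_derivative (\<lambda>z. G z l) (at z) w"
  by (rule frechet_derivative_partial[OF G_pair_differentiable, symmetric])

lemma G_pair_kernel: "frechet_derivative G_pair (at (z0, lam0)) (w, 0) = 0 \<longleftrightarrow> w \<in> Vc"
  using ker by (auto simp: frechet_derivative_G_pair_partial)

lemma value_off_base: "value_off (s0, 0, lam0) = 0"
  by (simp add: value_off_def emb_apply pat_s0 eq)

lemma G_pair_base_axial: "frechet_derivative G_pair (at (emb (s0, 0, lam0))) (emb (0, 1, 0)) = 0"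
  by (simp add: pat_s0 emb_apply pat_0_1 G_pair_kernel axial_dir_in_Vc)

lemma value_off_dx_base: "base_deriv value_off (0, 1, 0) = 0"
  by (simp add: frechet_derivative_value_off G_pair_base_axial)

lemma gap_quot_base: "gap_quot (s0, 0, lam0) = 0"
  by (simp add: gap_quot_x_zero frechet_derivative_gap G_pair_base_axial)

lemma value_off_ds_base: "base_deriv value_off (1, 0, 0) \<noteq> 0"
proof
  assume ds0: "base_deriv value_off (1, 0, 0) = 0"
  have "((\<lambda>s. (s, 0 :: real, lam0)) has_vector_derivative (1, 0, 0)) (at s0)"
    by (auto intro!: derivative_eq_intros simp: zero_prod_def)
  then have "frechet_derivative gap (at ((\<lambda>s. (s, 0 :: real, lam0)) s0)) (1, 0, 0) = 0"
    by (rule frechet_derivative_zero_along_curve[OF gap_differentiable _ open_UNIV UNIV_I])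
      (simp add: gap_sync)
  then have "frechet_derivative G_pair (at (z0, lam0)) (col_pattern K 1 1, 0) = 0"
    using frechet_derivative_G_pair_emb[of "(s0, 0, lam0)" "(1, 0, 0)"] ds0
    by (simp add: pat_s0 emb_apply pat_1_0 vec_eq_iff)
  then have "(col_pattern K 1 1 :: ('m, 'n) arr) \<in> Vc"
    by (simp add: G_pair_kernel)
  then show False
    by (simp add: col_pattern_in_Vc_iff)
qed

lemma inner_axial_dir:
  "inner (frechet_derivative (\<lambda>z. G z l) (at (pat s 0)) axial_dir) axial_dir
     = real CARD('m) * real (card K) * (real CARD('n) - real (card K)) * gap_quot (s, 0, l)"
proof -
  have "frechet_derivative (\<lambda>z. G z l) (at (pat s 0)) axial_dir
      = col_pattern K (gap_quot (s, 0, l) + frechet_derivative value_off (at (s, 0, l)) (0, 1, 0))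
          (frechet_derivative value_off (at (s, 0, l)) (0, 1, 0))"
    using frechet_derivative_G_pair_emb[of "(s, 0, l)" "(0, 1, 0)", unfolded emb_apply pat_0_1]
    by (simp add: frechet_derivative_G_pair_partial gap_quot_x_zero)
  then show ?thesis
    by (simp add: axial_dir_def inner_col_pattern algebra_simps)
qed

lemma pat_symmetry:
  assumes "x \<noteq> 0"
  shows "isotropy (pat s x) = full_axial_sub K \<and> pat s x \<in> Fix (axial_sub K) \<and> pat s x \<in> Fix rowperm_sub
    \<and> pat s x \<in> {a + b | a b. a \<in> Vc \<and> b \<in> Vs} \<and> consensus (pat s x)"
proof -
  have "s + x * (real CARD('n) - real (card K)) \<noteq> s - x * real (card K)"
    using assms card_K_bounds by (auto simp: algebra_simps)
  then show ?thesis
    unfolding pat_eq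
    by (intro conjI isotropy_col_pattern col_pattern_in_Fix_axial_sub col_pattern_in_Fix_rowperm_sub
        col_pattern_in_Vc_plus_Vs consensus_col_pattern)
qed

lemma branch_tangent:
  assumes S: "(S has_real_derivative S') (at 0)" "S 0 = s0"
    and \<Lambda>: "(\<Lambda> has_real_derivative \<Lambda>') (at 0)" "\<Lambda> 0 = lam0"
    and \<sigma>: "(\<sigma> has_real_derivative \<sigma>') (at lam0)" "\<sigma> lam0 = s0"
    and slope: "S' = \<sigma>' * \<Lambda>'"
  shows "((\<lambda>t. (pat (S t) t - pat (\<sigma> (\<Lambda> t)) 0 - t *\<^sub>R axial_dir) /\<^sub>R t) \<longlongrightarrow> 0) (at 0)"
proof -
  define h where "h t = S t - \<sigma> (\<Lambda> t)" for t
  have "(h has_real_derivative S' - \<sigma>' * \<Lambda>') (at 0)"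
    unfolding h_def using \<sigma>(1) \<Lambda> by (intro DERIV_diff S DERIV_chain2[where f = \<sigma>]) simp_all
  then have "((\<lambda>t. h t / t) \<longlongrightarrow> 0) (at 0)"
    using S(2) \<Lambda>(2) \<sigma>(2) slope by (simp add: has_field_derivative_iff h_def)
  then have "((\<lambda>t. (h t / t) *\<^sub>R col_pattern K 1 1) \<longlongrightarrow> (0 :: ('m, 'n) arr)) (at 0)"
    using tendsto_scaleR[OF _ tendsto_const] by fastforce
  moreover have "(pat (S t) t - pat (\<sigma> (\<Lambda> t)) 0 - t *\<^sub>R axial_dir) /\<^sub>R t = (h t / t) *\<^sub>R col_pattern K 1 1" for t
    by (simp add: pat_eq_scaleR h_def algebra_simps divide_inverse_commute)
  ultimately show ?thesis
    by simp
qed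

lemma synchronous_branch:
  obtains \<sigma> \<sigma>' where "\<sigma> lam0 = s0" "(\<sigma> has_real_derivative \<sigma>') (at lam0)"
    "\<sigma>' * base_deriv value_off (1, 0, 0) + base_deriv value_off (0, 0, 1) = 0"
    "\<forall>\<^sub>F l in at lam0. value_off (\<sigma> l, 0, l) = 0"
proof -
  \<comment> \<open>implicit_curve with the roles of x and l exchanged, the second equation being x = 0\<close>
  define sw where "sw p = (fst p, snd (snd p), fst (snd p))" for p :: "real \<times> real \<times> real"
  have sw: "bounded_linear sw"
    unfolding sw_def by (auto intro!: bounded_linear_intros)
  have X: "bounded_linear (\<lambda>p :: real \<times> real \<times> real. snd (snd p))"
    by (rule bounded_linear_compose[OF bounded_linear_snd bounded_linear_snd])
  have "frechet_derivative (\<lambda>p. value_off (sw p)) (at (s0, lam0, 0)) u = base_deriv value_off (sw u)" for u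
    using frechet_derivative_compose_linear[OF value_off_differentiable sw] by (simp add: sw_def)
  then have det: "frechet_derivative (\<lambda>p. value_off (sw p)) (at (s0, lam0, 0)) (1, 0, 0)
        * frechet_derivative (\<lambda>p. snd (snd p)) (at (s0, lam0, 0)) (0, 0, 1)
      - frechet_derivative (\<lambda>p. value_off (sw p)) (at (s0, lam0, 0)) (0, 0, 1)
        * frechet_derivative (\<lambda>p. snd (snd p)) (at (s0, lam0, 0)) (1, 0, 0) \<noteq> 0"
    using value_off_ds_base by (simp add: C1_map_linear(2)[OF X] sw_def)
  have zero: "value_off (sw (s0, lam0, 0)) = 0" "snd (snd (s0, lam0, 0 :: real)) = 0"
    using value_off_base by (simp_all add: sw_def)
  obtain \<epsilon> \<sigma> X where "\<epsilon> > 0" "\<sigma> lam0 = s0" and \<sigma>_diff: "\<sigma> differentiable (at lam0)"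
    and on_ball: "\<And>l. l \<in> ball lam0 \<epsilon> \<Longrightarrow> value_off (sw (\<sigma> l, l, X l)) = 0 \<and> snd (snd (\<sigma> l, l, X l)) = 0"
    by (rule implicit_curve[OF C1_map_compose_linear[OF C1_map_value_off sw] C1_map_linear(1)[OF X] zero det])
      blast
  have sync_zero: "value_off (\<sigma> l, 0, l) = 0" if "l \<in> ball lam0 \<epsilon>" for l
    using on_ball[OF that] by (auto simp: sw_def)
  obtain \<sigma>' where \<sigma>': "(\<sigma> has_real_derivative \<sigma>') (at lam0)"
    using \<sigma>_diff real_differentiable_def by blast
  have "\<sigma>' * base_deriv value_off (1, 0, 0) + 0 * base_deriv value_off (0, 1, 0) + 1 * base_deriv value_off (0, 0, 1) = 0"
    using frechet_derivative_triple_zero_along_curve[where A = value_off and a = \<sigma> and b = "\<lambda>_. 0" and c = "\<lambda>l. l",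
        OF _ \<sigma>' DERIV_const DERIV_ident
        open_ball centre_in_ball[THEN iffD2, OF \<open>\<epsilon> > 0\<close>] sync_zero] \<open>\<sigma> lam0 = s0\<close>
    by (simp add: value_off_differentiable)
  moreover have "\<forall>\<^sub>F l in at lam0. value_off (\<sigma> l, 0, l) = 0"
    using eventually_at_in_open'[OF open_ball centre_in_ball[THEN iffD2, OF \<open>\<epsilon> > 0\<close>]]
    by (rule eventually_mono) (rule sync_zero)
  ultimately show ?thesis
    using that \<open>\<sigma> lam0 = s0\<close> \<sigma>' by simp
qed

lemma synchronous_equilibria:
  assumes "\<sigma> lam0 = s0" and "(\<sigma> has_real_derivative \<sigma>') (at lam0)"
    and "\<forall>\<^sub>F l in at lam0. value_off (\<sigma> l, 0, l) = 0"
  shows "pat (\<sigma> lam0) 0 = z0 \<and> continuous (at lam0) (\<lambda>l. pat (\<sigma> l) 0) \<and> (\<forall>l. pat (\<sigma> l) 0 \<in> Vs)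
    \<and> (\<forall>\<^sub>F l in at lam0. G (pat (\<sigma> l) 0) l = 0)"
proof (intro conjI allI)
  show "pat (\<sigma> lam0) 0 = z0"
    by (simp add: assms(1) pat_s0)
  show "continuous (at lam0) (\<lambda>l. pat (\<sigma> l) 0)"
    unfolding pat_eq_scaleR
    by (intro continuous_add continuous_scaleR DERIV_continuous[OF assms(2)] continuous_const)
  show "pat (\<sigma> l) 0 \<in> Vs" for l
    by (rule pat_const_in_Vs)
  show "\<forall>\<^sub>F l in at lam0. G (pat (\<sigma> l) 0) l = 0"
    using assms(3) by (rule eventually_mono) (simp add: G_pat_eq_0 gap_sync)
qed

lemma crossing_imp_nondegenerate:
  assumes \<sigma>0: "\<sigma> lam0 = s0" and \<sigma>': "(\<sigma> has_real_derivative \<sigma>') (at lam0)"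
    and sync_slope: "\<sigma>' * base_deriv value_off (1, 0, 0) + base_deriv value_off (0, 0, 1) = 0"
    and cross: "((\<lambda>l. inner (frechet_derivative (\<lambda>z. G z l) (at (pat (\<sigma> l) 0)) axial_dir) axial_dir)
      has_real_derivative d) (at lam0)" and "d \<noteq> 0"
  shows "base_deriv value_off (1, 0, 0) * base_deriv gap_quot (0, 0, 1)
    - base_deriv value_off (0, 0, 1) * base_deriv gap_quot (1, 0, 0) \<noteq> 0"
proof -
  define M where "M = real CARD('m) * real (card K) * (real CARD('n) - real (card K))"
  define As Al where "As = base_deriv value_off (1, 0, 0)" and "Al = base_deriv value_off (0, 0, 1)"
  define Cs Cl where "Cs = base_deriv gap_quot (1, 0, 0)" and "Cl = base_deriv gap_quot (0, 0, 1)"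
  have "((\<lambda>l. gap_quot (\<sigma> l, 0, l)) has_real_derivative
      frechet_derivative gap_quot (at (\<sigma> lam0, 0, lam0)) (\<sigma>', 0, 1)) (at lam0)"
    by (rule has_real_derivative_compose_curve[OF gap_quot_differentiable
          has_vector_derivative_triple[OF \<sigma>' DERIV_const DERIV_ident]])
  then have "((\<lambda>l. M * gap_quot (\<sigma> l, 0, l)) has_real_derivative M * (\<sigma>' * Cs + Cl)) (at lam0)"
    using frechet_derivative_triple_eq[OF gap_quot_differentiable,
        where p = "(s0, 0, lam0)" and a = \<sigma>' and b = 0 and c = 1]
    by (auto intro: DERIV_cmult simp: \<sigma>0 Cs_def Cl_def)
  moreover have "(\<lambda>l. inner (frechet_derivative (\<lambda>z. G z l) (at (pat (\<sigma> l) 0)) axial_dir) axial_dir)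
      = (\<lambda>l. M * gap_quot (\<sigma> l, 0, l))"
    by (simp add: inner_axial_dir M_def)
  ultimately have "d = M * (\<sigma>' * Cs + Cl)"
    using cross DERIV_unique by metis
  then have "\<sigma>' * Cs + Cl \<noteq> 0"
    using \<open>d \<noteq> 0\<close> by auto
  moreover have "As * Cl - Al * Cs = As * (\<sigma>' * Cs + Cl)"
    using sync_slope unfolding As_def[symmetric] Al_def[symmetric]
    by (simp add: algebra_simps eq_neg_iff_add_eq_0[symmetric])
  ultimately show ?thesis
    using value_off_ds_base by (simp add: As_def Al_def Cs_def Cl_def)
qed

lemma bifurcating_branch:
  assumes det: "base_deriv value_off (1, 0, 0) * base_deriv gap_quot (0, 0, 1)
    - base_deriv value_off (0, 0, 1) * base_deriv gap_quot (1, 0, 0) \<noteq> 0"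
  obtains \<epsilon> S \<Lambda> S' \<Lambda>' where "\<epsilon> > 0" "S 0 = s0" "\<Lambda> 0 = lam0"
    "continuous_on (ball 0 \<epsilon>) S" "continuous_on (ball 0 \<epsilon>) \<Lambda>"
    "\<And>t. t \<in> ball 0 \<epsilon> \<Longrightarrow> G (pat (S t) t) (\<Lambda> t) = 0"
    "(S has_real_derivative S') (at 0)" "(\<Lambda> has_real_derivative \<Lambda>') (at 0)"
    "S' * base_deriv value_off (1, 0, 0) + \<Lambda>' * base_deriv value_off (0, 0, 1) = 0"
proof -
  obtain \<epsilon> S \<Lambda> where "\<epsilon> > 0" "S 0 = s0" "\<Lambda> 0 = lam0"
    and cont: "continuous_on (ball 0 \<epsilon>) S" "continuous_on (ball 0 \<epsilon>) \<Lambda>"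
    and branch: "\<And>t. t \<in> ball 0 \<epsilon> \<Longrightarrow> value_off (S t, t, \<Lambda> t) = 0 \<and> gap_quot (S t, t, \<Lambda> t) = 0"
    and S_diff: "S differentiable (at 0)" and \<Lambda>_diff: "\<Lambda> differentiable (at 0)"
    by (rule implicit_curve[OF C1_map_value_off C1_map_gap_quot value_off_base gap_quot_base det]) blast
  obtain S' where S': "(S has_real_derivative S') (at 0)"
    using S_diff real_differentiable_def by blast
  obtain \<Lambda>' where \<Lambda>': "(\<Lambda> has_real_derivative \<Lambda>') (at 0)"
    using \<Lambda>_diff real_differentiable_def by blast
  have "G (pat (S t) t) (\<Lambda> t) = 0" if "t \<in> ball 0 \<epsilon>" for t
    using branch[OF that] by (simp add: G_pat_eq_0 gap_eq)
  moreover have "S' * base_deriv value_off (1, 0, 0) + 1 * base_deriv value_off (0, 1, 0)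
      + \<Lambda>' * base_deriv value_off (0, 0, 1) = 0"
    using frechet_derivative_triple_zero_along_curve[where A = value_off and a = S and b = "\<lambda>t. t" and c = \<Lambda>,
        OF _ S' DERIV_ident \<Lambda>'
        open_ball centre_in_ball[THEN iffD2, OF \<open>\<epsilon> > 0\<close>]] branch \<open>S 0 = s0\<close> \<open>\<Lambda> 0 = lam0\<close>
    by (simp add: value_off_differentiable)
  ultimately show ?thesis
    using that \<open>\<epsilon> > 0\<close> \<open>S 0 = s0\<close> \<open>\<Lambda> 0 = lam0\<close> cont S' \<Lambda>' value_off_dx_base by simp
qed

theorem consensus_branch:
  assumes generic:
    "\<forall>zs v. zs lam0 = z0 \<and> continuous (at lam0) zs \<and> (\<forall>l. zs l \<in> Vs)
          \<and> (\<forall>\<^sub>F l in at lam0. G (zs l) l = 0) \<and> v \<in> Vc \<and> v \<noteq> 0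
       \<longrightarrow> (\<exists>d. d \<noteq> 0 \<and>
             ((\<lambda>l. inner (frechet_derivative (\<lambda>z. G z l) (at (zs l)) v) v)
                has_real_derivative d) (at lam0))"
  shows "axial_consensus_branch G z0 lam0 K"
proof -
  obtain \<sigma> \<sigma>' where \<sigma>0: "\<sigma> lam0 = s0" and \<sigma>': "(\<sigma> has_real_derivative \<sigma>') (at lam0)"
    and sync_slope: "\<sigma>' * base_deriv value_off (1, 0, 0) + base_deriv value_off (0, 0, 1) = 0"
    and sync_zero: "\<forall>\<^sub>F l in at lam0. value_off (\<sigma> l, 0, l) = 0"
    by (rule synchronous_branch)
  define zs where "zs l = pat (\<sigma> l) 0" for l
  have zs: "zs lam0 = z0 \<and> continuous (at lam0) zs \<and> (\<forall>l. zs l \<in> Vs) \<and> (\<forall>\<^sub>F l in at lam0. G (zs l) l = 0)"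
    unfolding zs_def[abs_def] by (rule synchronous_equilibria[OF \<sigma>0 \<sigma>' sync_zero])
  then obtain d where "d \<noteq> 0" and cross: "((\<lambda>l. inner (frechet_derivative (\<lambda>z. G z l) (at (zs l)) axial_dir)
      axial_dir) has_real_derivative d) (at lam0)"
    using generic axial_dir_in_Vc axial_dir_nonzero by blast
  obtain \<epsilon> S \<Lambda> S' \<Lambda>' where "\<epsilon> > 0" "S 0 = s0" "\<Lambda> 0 = lam0"
    and cont: "continuous_on (ball 0 \<epsilon>) S" "continuous_on (ball 0 \<epsilon>) \<Lambda>"
    and equilibria: "\<And>t. t \<in> ball 0 \<epsilon> \<Longrightarrow> G (pat (S t) t) (\<Lambda> t) = 0"
    and S': "(S has_real_derivative S') (at 0)" and \<Lambda>': "(\<Lambda> has_real_derivative \<Lambda>') (at 0)"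
    and slope: "S' * base_deriv value_off (1, 0, 0) + \<Lambda>' * base_deriv value_off (0, 0, 1) = 0"
    using bifurcating_branch[OF crossing_imp_nondegenerate[where \<sigma> = \<sigma>,
          OF \<sigma>0 \<sigma>' sync_slope cross[unfolded zs_def] \<open>d \<noteq> 0\<close>]] by blast
  have "(S' - \<sigma>' * \<Lambda>') * base_deriv value_off (1, 0, 0) = 0"
    using slope sync_slope by (simp add: algebra_simps eq_neg_iff_add_eq_0[symmetric])
  then have "S' = \<sigma>' * \<Lambda>'"
    using value_off_ds_base by simp
  define z where "z t = pat (S t) t" for t
  have I: "ball 0 \<epsilon> = {-\<epsilon><..<\<epsilon>}"
    by (simp add: ball_eq_greaterThanLessThan)
  have "continuous_on {-\<epsilon><..<\<epsilon>} z"
    unfolding z_def pat_eq_scaleR I[symmetric] by (intro continuous_intros cont)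
  moreover have "\<forall>t\<in>{-\<epsilon><..<\<epsilon>}. G (z t) (\<Lambda> t) = 0"
    using equilibria unfolding I z_def by blast
  moreover have "\<forall>t\<in>{-\<epsilon><..<\<epsilon>}. t \<noteq> 0 \<longrightarrow>
      isotropy (z t) = full_axial_sub K \<and> z t \<in> Fix (axial_sub K) \<and> z t \<in> Fix rowperm_sub
      \<and> z t \<in> {a + b | a b. a \<in> Vc \<and> b \<in> Vs} \<and> consensus (z t)"
    unfolding z_def using pat_symmetry by blast
  moreover have "((\<lambda>t. (z t - zs (\<Lambda> t) - t *\<^sub>R axial_dir) /\<^sub>R t) \<longlongrightarrow> 0) (at 0)"
    unfolding z_def zs_def
    by (rule branch_tangent[OF S' \<open>S 0 = s0\<close> \<Lambda>' \<open>\<Lambda> 0 = lam0\<close> \<sigma>' \<sigma>0 \<open>S' = \<sigma>' * \<Lambda>'\<close>])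
  moreover have "z 0 = z0"
    by (simp add: z_def \<open>S 0 = s0\<close> pat_s0)
  moreover have "continuous_on {-\<epsilon><..<\<epsilon>} \<Lambda>"
    using cont(2) unfolding I .
  ultimately show ?thesis
    unfolding axial_consensus_branch_def
    using \<open>\<epsilon> > 0\<close> \<open>\<Lambda> 0 = lam0\<close> zs axial_dir_in_Vc axial_dir_nonzero by blast
qed

end

theorem theorem7p1:
  fixes G :: "('m::finite, 'n::finite) arr \<Rightarrow> real \<Rightarrow> ('m, 'n) arr"
    and z0 :: "('m, 'n) arr" and lam0 :: real
  assumes m2: "CARD('m) \<ge> 2" and n2: "CARD('n) \<ge> 2"
    and smooth: "smooth_map (\<lambda>p. G (fst p) (snd p))"
    and adm: "\<forall>l. admissible (\<lambda>z. G z l)"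
    and sync: "z0 \<in> Vs" and eq: "G z0 lam0 = 0"
    and ker: "{w. frechet_derivative (\<lambda>z. G z lam0) (at z0) w = 0} = Vc"
    and generic:
      "\<forall>zs v. zs lam0 = z0 \<and> continuous (at lam0) zs \<and> (\<forall>l. zs l \<in> Vs)
            \<and> (\<forall>\<^sub>F l in at lam0. G (zs l) l = 0) \<and> v \<in> Vc \<and> v \<noteq> 0
         \<longrightarrow> (\<exists>d. d \<noteq> 0 \<and>
               ((\<lambda>l. inner (frechet_derivative (\<lambda>z. G z l) (at (zs l)) v) v)
                  has_real_derivative d) (at lam0))"
  shows "\<forall>k. 1 \<le> k \<and> k \<le> CARD('n) - 1 \<longrightarrow>
    (\<exists>K \<epsilon> z lam zs v.
        card K = k \<and> \<epsilon> > 0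
      \<and> continuous_on {-\<epsilon><..<\<epsilon>} z \<and> continuous_on {-\<epsilon><..<\<epsilon>} lam
      \<and> z 0 = z0 \<and> lam 0 = lam0
      \<and> (\<forall>t\<in>{-\<epsilon><..<\<epsilon>}. G (z t) (lam t) = 0)
      \<and> (\<forall>t\<in>{-\<epsilon><..<\<epsilon>}. t \<noteq> 0 \<longrightarrow>
            isotropy (z t) = full_axial_sub K
          \<and> z t \<in> Fix (axial_sub K)
          \<and> z t \<in> Fix rowperm_sub
          \<and> z t \<in> {a + b | a b. a \<in> Vc \<and> b \<in> Vs}
          \<and> consensus (z t))
      \<and> zs lam0 = z0 \<and> continuous (at lam0) zs \<and> (\<forall>l. zs l \<in> Vs)
      \<and> (\<forall>\<^sub>F l in at lam0. G (zs l) l = 0)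
      \<and> v \<in> Vc \<and> v \<noteq> 0
      \<and> ((\<lambda>t. (z t - zs (lam t) - t *\<^sub>R v) /\<^sub>R t) \<longlongrightarrow> 0) (at 0))"
proof -
  have "\<exists>K. card K = k \<and> axial_consensus_branch G z0 lam0 K" if k: "1 \<le> k \<and> k \<le> CARD('n) - 1" for k
  proof -
    have "k < CARD('n)"
      using k by (metis diff_less le_less_trans less_one not_le zero_less_card_finite)
    then obtain K :: "'n set" where K: "card K = k"
      using obtain_subset_with_card_n[of k "UNIV :: 'n set"] by auto
    moreover have "K \<noteq> {}" and "K \<noteq> UNIV"
      using K k \<open>k < CARD('n)\<close> by auto
    ultimately obtain j1 j2 where "j1 \<in> K" "j2 \<notin> K"
      by blast
    \<comment> \<open>any row will do: it only selects entries of consensus arrays\<close>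
    then interpret consensus_bifurcation G z0 lam0 K j1 j2 undefined
      using smooth adm sync eq ker by unfold_locales
    show ?thesis
      using K consensus_branch[OF generic] by blast
  qed
  then show ?thesis
    unfolding axial_consensus_branch_def by blast
qed

end
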